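(* Let $(\Omega,\mathcal{F},\mathbb{P})$ be an atomless probability space, let $Z_t$ be a $\mathbb{R}^D$-valued random vector (risk factors) whose distribution has compact support, and let $V_t$ (value function) and $U_t$ (its approximation) be real-valued functions on $\operatorname{supp}(Z_t)$, with $V_t$ regular enough that $X_t:=V_t(Z_t)^+\in L^\infty$. Let $z_t^1,\dots,z_t^n\in\operatorname{supp}(Z_t)$ be realizations of $Z_t$ and set $\mathbf{x}_t=(V_t(z_t^i)^+)_{i=1}^n$, $\mathbf{y}_t=(U_t(z_t^i)^+)_{i=1}^n$. Then for any law-invariant exposure measure $\rho$ on $\mathcal{M}_{1,c}(\mathbb{R})$, \[ \left|\rho(X_t)-\widehat{\rho}(\mathbf{y}_t)\right|\le \left|\rho(X_t)-\widehat{\rho}(\mathbf{x}_t)\right|+\Vert V_t-U_t\Vert_\infty . \]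
   Context: $x^+=\max\{x,0\}$. An exposure measure is a map $\rho:L^0(\Omega,\mathcal{F},\mathbb{P})\to\mathbb{R}\cup\{\infty\}$ that is monotone ($X_1\le X_2\Rightarrow\rho(X_1)\le\rho(X_2)$) and cash-additive ($\rho(X+c)=\rho(X)+c$ for $c\in\mathbb{R}$). It is law-invariant if $\rho(X)$ depends only on the distribution function $F_X$ of $X$, so one writes $\rho(X)=\rho(F_X)$; $\mathcal{M}_{1,c}(\mathbb{R})$ denotes the compactly supported probability measures on $\mathbb{R}$, and "$\rho$ on $\mathcal{M}_{1,c}(\mathbb{R})$" means $\rho$ regarded as a map on such laws. For a finite sample $\mathbf{x}=(x^i)_{i=1}^n$, the empirical distribution is $F_{\mathbf{x}}(x)=\frac1n\sum_{i=1}^n\mathbb{1}_{\{x\ge x^i\}}$ and the empirical estimator is $\widehat\rho(\mathbf{x})=\rho(F_{\mathbf{x}})$. For a function $f$ on a set $S$, $\Vert f\Vert_\infty=\sup_{s\in S}|f(s)|$ (genuine supremum); here $S=\operatorname{supp}(Z_t)$. *)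

theory Defs
  imports "HOL-Probability.Probability"
begin

definition atomless :: "'a measure \<Rightarrow> bool" where
  "atomless M \<longleftrightarrow> (\<forall>A\<in>sets M. measure M A > 0 \<longrightarrow>
     (\<exists>B\<in>sets M. B \<subseteq> A \<and> 0 < measure M B \<and> measure M B < measure M A))"

definition cdf_of :: "'a measure \<Rightarrow> ('a \<Rightarrow> real) \<Rightarrow> real \<Rightarrow> real" where
  "cdf_of M X = (\<lambda>x. measure M {\<omega> \<in> space M. X \<omega> \<le> x})"

definition empirical_cdf :: "nat \<Rightarrow> (nat \<Rightarrow> real) \<Rightarrow> real \<Rightarrow> real" where
  "empirical_cdf n xs = (\<lambda>x. (\<Sum>i<n. if x \<ge> xs i then 1 else 0) / real n)"

definition supp_law :: "'a measure \<Rightarrow> ('a \<Rightarrow> 'b::metric_space) \<Rightarrow> 'b set" where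
  "supp_law M Z = {z. \<forall>e>0. measure M {\<omega> \<in> space M. Z \<omega> \<in> ball z e} > 0}"

definition compact_law_rv :: "'a measure \<Rightarrow> ('a \<Rightarrow> real) \<Rightarrow> bool" where
  "compact_law_rv M X \<longleftrightarrow> X \<in> borel_measurable M \<and>
     (\<exists>K. compact K \<and> (AE \<omega> in M. X \<omega> \<in> K))"

text \<open>A law-invariant exposure measure on compactly supported laws, given as a
  function rho of distribution functions (rho(X) = rho(F_X)): monotone and
  cash-additive on random variables (with compactly supported laws) over M.\<close>
definition law_invariant_exposure :: "'a measure \<Rightarrow> ((real \<Rightarrow> real) \<Rightarrow> real) \<Rightarrow> bool" where
  "law_invariant_exposure M rho \<longleftrightarrow>
     (\<forall>X1 X2. compact_law_rv M X1 \<longrightarrow> compact_law_rv M X2 \<longrightarrow>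
        (AE \<omega> in M. X1 \<omega> \<le> X2 \<omega>) \<longrightarrow> rho (cdf_of M X1) \<le> rho (cdf_of M X2)) \<and>
     (\<forall>X c. compact_law_rv M X \<longrightarrow>
        rho (cdf_of M (\<lambda>\<omega>. X \<omega> + c)) = rho (cdf_of M X) + c)"

end

(* On an atomless probability space every empirical distribution is the distribution of a
   random variable: by Sierpinski's intermediate value theorem for atomless measures the space
   splits into n events of probability 1/n, and a sample x evaluated at the index of the event
   containing the outcome has distribution function F_x.  Monotonicity and cash-additivity make
   rho 1-Lipschitz for the uniform distance of random variables, hence
   |rho(F_x) - rho(F_y)| <= max_i |x_i - y_i| <= sup |V - U|, as t -> t^+ is 1-Lipschitz.
   The claim is then the triangle inequality. *)

theory Submission
  imports Defs
begin

lemma (in finite_measure) atomless_half_subset: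
  assumes "atomless M" "C \<in> sets M" "0 < measure M C"
  shows "\<exists>B\<in>sets M. B \<subseteq> C \<and> 0 < measure M B \<and> measure M B \<le> measure M C / 2"
proof -
  obtain B where B: "B \<in> sets M" "B \<subseteq> C" "0 < measure M B" "measure M B < measure M C"
    using assms unfolding atomless_def by blast
  have "measure M (C - B) = measure M C - measure M B"
    using B assms(2) by (simp add: finite_measure_Diff)
  moreover have "C - B \<in> sets M"
    using B assms(2) by auto
  ultimately show ?thesis
  proof (cases "measure M B \<le> measure M C / 2")
    case True
    with B show ?thesis by blast
  next
    case False
    with B \<open>measure M (C - B) = _\<close> \<open>C - B \<in> sets M\<close> show ?thesis
      by (intro bexI[of _ "C - B"]) auto
  qed
qed

lemma (in finite_measure) atomless_small_subset:
  assumes "atomless M" "A \<in> sets M" "0 < measure M A" "0 < e"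
  shows "\<exists>C\<in>sets M. C \<subseteq> A \<and> 0 < measure M C \<and> measure M C < e"
proof -
  have halving: "\<exists>C\<in>sets M. C \<subseteq> A \<and> 0 < measure M C \<and> measure M C \<le> measure M A / 2 ^ k" for k
  proof (induction k)
    case 0
    then show ?case using assms by auto
  next
    case (Suc k)
    then obtain C where C: "C \<in> sets M" "C \<subseteq> A" "0 < measure M C" "measure M C \<le> measure M A / 2 ^ k"
      by blast
    then obtain B where "B \<in> sets M" "B \<subseteq> C" "0 < measure M B" "measure M B \<le> measure M C / 2"
      using atomless_half_subset[OF assms(1)] by blast
    with C show ?case by (intro bexI[of _ B]) auto
  qed
  obtain k where "measure M A / e < 2 ^ k"
    using real_arch_pow[of 2 "measure M A / e"] by auto
  then have "measure M A / 2 ^ k < e"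
    using assms(4) by (simp add: field_simps)
  with halving[of k] show ?thesis
    by (meson order.strict_trans1)
qed

lemma (in finite_measure) half_maximal_subset:
  assumes "A \<in> sets M" "0 \<le> t"
  shows "\<exists>C\<in>sets M. C \<subseteq> A \<and> measure M C \<le> t \<and>
           (\<forall>D\<in>sets M. D \<subseteq> A \<and> measure M D \<le> t \<longrightarrow> measure M D \<le> 2 * measure M C)"
proof -
  define S where "S = measure M ` {D \<in> sets M. D \<subseteq> A \<and> measure M D \<le> t}"
  have "0 \<in> S"
    using assms unfolding S_def by (auto intro!: image_eqI[of _ _ "{}"])
  have S_le_Sup: "s \<le> Sup S" if "s \<in> S" for s
    using that bounded_measure by (intro cSup_upper bdd_aboveI[of _ "measure M (space M)"]) (auto simp: S_def)
  show ?thesis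
  proof (cases "Sup S = 0")
    case True
    then show ?thesis
      using S_le_Sup by (intro bexI[of _ "{}"]) (auto simp: S_def assms)
  next
    case False
    then have "Sup S / 2 < Sup S"
      using S_le_Sup[OF \<open>0 \<in> S\<close>] by simp
    then obtain C where "C \<in> sets M" "C \<subseteq> A" "measure M C \<le> t" "Sup S / 2 < measure M C"
      using less_cSupD[of S] \<open>0 \<in> S\<close> unfolding S_def by blast
    moreover have "measure M D \<le> Sup S" if "D \<in> sets M" "D \<subseteq> A" "measure M D \<le> t" for D
      using that by (intro S_le_Sup) (auto simp: S_def)
    ultimately show ?thesis
      by (intro bexI[of _ C]) fastforce+
  qed
qed

lemma (in finite_measure) greedy_subset_chain:
  assumes "A \<in> sets M" "0 \<le> t"
  shows "\<exists>Bs. incseq Bs \<and> (\<forall>k. Bs k \<in> sets M \<and> Bs k \<subseteq> A \<and> measure M (Bs k) \<le> t) \<and>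
           (\<forall>k D. D \<in> sets M \<and> D \<subseteq> A - Bs k \<and> measure M D \<le> t - measure M (Bs k) \<longrightarrow>
              measure M D \<le> 2 * (measure M (Bs (Suc k)) - measure M (Bs k)))"
proof -
  define admissible where
    "admissible B C \<longleftrightarrow> C \<in> sets M \<and> C \<subseteq> A - B \<and> measure M C \<le> t - measure M B" for B C
  define good where "good B \<longleftrightarrow> B \<in> sets M \<and> B \<subseteq> A \<and> measure M B \<le> t" for B
  have "\<exists>C. admissible B C \<and> (\<forall>D. admissible B D \<longrightarrow> measure M D \<le> 2 * measure M C)"
    if "good B" for B
  proof -
    have "A - B \<in> sets M" "0 \<le> t - measure M B"
      using that assms(1) by (auto simp: good_def)
    from half_maximal_subset[OF this] show ?thesis
      unfolding admissible_def by blast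
  qed
  then have "\<exists>next_piece. \<forall>B. good B \<longrightarrow> admissible B (next_piece B) \<and>
      (\<forall>D. admissible B D \<longrightarrow> measure M D \<le> 2 * measure M (next_piece B))"
    by (intro choice) blast
  then obtain next_piece where next_piece: "\<And>B. good B \<Longrightarrow> admissible B (next_piece B)"
    and greedy: "\<And>B D. good B \<Longrightarrow> admissible B D \<Longrightarrow> measure M D \<le> 2 * measure M (next_piece B)"
    by blast
  define Bs where "Bs k = ((\<lambda>B. B \<union> next_piece B) ^^ k) {}" for k
  have Bs_Suc: "Bs (Suc k) = Bs k \<union> next_piece (Bs k)" for k
    by (simp add: Bs_def)
  have measure_Bs_Suc: "measure M (Bs (Suc k)) = measure M (Bs k) + measure M (next_piece (Bs k))"
    if "good (Bs k)" for k
    using next_piece[OF that] that unfolding Bs_Suc good_def admissible_def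
    by (intro finite_measure_Union) auto
  have good_Bs: "good (Bs k)" for k
  proof (induction k)
    case 0
    then show ?case using assms by (simp add: good_def Bs_def)
  next
    case (Suc k)
    then show ?case
      using next_piece[OF Suc] measure_Bs_Suc[OF Suc] unfolding good_def admissible_def Bs_Suc by auto
  qed
  have "incseq Bs"
    by (intro incseq_SucI) (auto simp: Bs_Suc)
  moreover have "measure M D \<le> 2 * (measure M (Bs (Suc k)) - measure M (Bs k))"
    if "admissible (Bs k) D" for k D
    using greedy[OF good_Bs that] measure_Bs_Suc[OF good_Bs] by simp
  ultimately show ?thesis
    using good_Bs unfolding good_def admissible_def by (intro exI[of _ Bs]) blast
qed

lemma (in finite_measure) atomless_measure_intermediate_value:
  assumes "atomless M" "A \<in> sets M" "0 \<le> t" "t \<le> measure M A"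
  shows "\<exists>B\<in>sets M. B \<subseteq> A \<and> measure M B = t"
proof -
  obtain Bs where "incseq Bs" and Bs_good: "\<forall>k. Bs k \<in> sets M \<and> Bs k \<subseteq> A \<and> measure M (Bs k) \<le> t"
    and greedy: "\<forall>k D. D \<in> sets M \<and> D \<subseteq> A - Bs k \<and> measure M D \<le> t - measure M (Bs k) \<longrightarrow>
                   measure M D \<le> 2 * (measure M (Bs (Suc k)) - measure M (Bs k))"
    using greedy_subset_chain[OF assms(2,3)] by (elim exE conjE)
  have Bs: "Bs k \<in> sets M" "Bs k \<subseteq> A" "measure M (Bs k) \<le> t" for k
    using Bs_good by auto
  define B where "B = (\<Union>k. Bs k)"
  have B: "B \<in> sets M" "B \<subseteq> A" "\<And>k. Bs k \<subseteq> B"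
    using Bs by (auto simp: B_def)
  have "(\<lambda>k. measure M (Bs k)) \<longlonglongrightarrow> measure M B"
    unfolding B_def using Bs \<open>incseq Bs\<close> by (intro finite_Lim_measure_incseq) auto
  then have "measure M B \<le> t"
    using Bs(3) by (intro LIMSEQ_le_const2) auto
  moreover have "\<not> measure M B < t"
    \<comment> \<open>a leftover piece D would be admissible at every stage,
      so the chain would grow by measure M D / 2 per step\<close>
  proof
    assume "measure M B < t"
    then have "0 < measure M (A - B)"
      using assms B by (simp add: finite_measure_Diff)
    then obtain D where D: "D \<in> sets M" "D \<subseteq> A - B" "0 < measure M D" "measure M D < t - measure M B"
      using atomless_small_subset[OF assms(1), of "A - B" "t - measure M B"] assms(2) B \<open>measure M B < t\<close>
      by auto
    have increment: "measure M D \<le> 2 * (measure M (Bs (Suc k)) - measure M (Bs k))" for k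
    proof -
      have "measure M (Bs k) \<le> measure M B"
        using B by (intro finite_measure_mono) auto
      then have "measure M D \<le> t - measure M (Bs k)"
        using D by linarith
      moreover have "D \<subseteq> A - Bs k"
        using D B(3)[of k] by blast
      ultimately show ?thesis
        using greedy D(1) by blast
    qed
    have growth: "real k * measure M D / 2 \<le> measure M (Bs k)" for k
    proof (induction k)
      case (Suc k)
      then show ?case
        using increment[of k] by (simp add: distrib_right)
    qed simp
    obtain k where "t < real k * (measure M D / 2)"
      using ex_less_of_nat_mult[of "measure M D / 2" t] D by auto
    with growth[of k] Bs(3)[of k] show False
      by simp
  qed
  ultimately show ?thesis
    using B by (intro bexI[of _ B]) auto
qed

lemma (in finite_measure) atomless_equipartition:
  assumes "atomless M" "A \<in> sets M" "1 \<le> k" "measure M A = real k * c"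
  shows "\<exists>f::'a \<Rightarrow> nat. (\<forall>\<omega>\<in>A. f \<omega> < k) \<and>
           (\<forall>i<k. {\<omega>\<in>A. f \<omega> = i} \<in> sets M \<and> measure M {\<omega>\<in>A. f \<omega> = i} = c)"
  using assms(3,2,4)
proof (induction k arbitrary: A rule: nat_induct_at_least)
  case base
  then show ?case by (intro exI[of _ "\<lambda>_. 0"]) simp
next
  case (Suc k)
  have "0 \<le> c"
    using Suc.prems(2) measure_nonneg[of M A] zero_le_mult_iff[of "real (Suc k)" c] by auto
  then obtain B where B: "B \<in> sets M" "B \<subseteq> A" "measure M B = c"
    using atomless_measure_intermediate_value[OF assms(1) Suc.prems(1), of c] Suc.prems(2)
    by (auto simp: algebra_simps)
  have "measure M (A - B) = real k * c"
    using B Suc.prems by (simp add: finite_measure_Diff algebra_simps)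
  then obtain f :: "'a \<Rightarrow> nat" where f: "\<forall>\<omega>\<in>A - B. f \<omega> < k"
    "\<forall>i<k. {\<omega>\<in>A - B. f \<omega> = i} \<in> sets M \<and> measure M {\<omega>\<in>A - B. f \<omega> = i} = c"
    using Suc.IH[of "A - B"] B(1) Suc.prems(1) by blast
  define g where "g \<omega> = (if \<omega> \<in> B then k else f \<omega>)" for \<omega>
  have "{\<omega>\<in>A. g \<omega> = i} = {\<omega>\<in>A - B. f \<omega> = i}" if "i < k" for i
    using that by (auto simp: g_def)
  moreover have "{\<omega>\<in>A. g \<omega> = k} = B"
    using B(2) f(1) by (auto simp: g_def)
  ultimately show ?case
    using f B by (intro exI[of _ g]) (auto simp: g_def less_Suc_eq)
qed

lemma (in finite_measure) cdf_of_uniform_index_comp: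
  assumes "\<forall>\<omega>\<in>space M. f \<omega> < n"
    and "\<forall>i<n. {\<omega>\<in>space M. f \<omega> = i} \<in> sets M \<and> measure M {\<omega>\<in>space M. f \<omega> = i} = 1 / real n"
  shows "cdf_of M (\<lambda>\<omega>. x (f \<omega>)) = empirical_cdf n x"
proof
  fix a
  define S where "S = {i\<in>{..<n}. x i \<le> a}"
  have "{\<omega>\<in>space M. x (f \<omega>) \<le> a} = (\<Union>i\<in>S. {\<omega>\<in>space M. f \<omega> = i})"
    using assms(1) by (auto simp: S_def)
  then have "cdf_of M (\<lambda>\<omega>. x (f \<omega>)) a = (\<Sum>i\<in>S. measure M {\<omega>\<in>space M. f \<omega> = i})"
    unfolding cdf_of_def
    by (simp, intro finite_measure_finite_Union)
      (use assms(2) in \<open>auto simp: S_def disjoint_family_on_def\<close>)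
  also have "\<dots> = real (card S) / real n"
    using assms(2) by (simp add: S_def)
  also have "real (card S) = (\<Sum>i<n. if a \<ge> x i then 1 else 0)"
    unfolding S_def by (simp add: sum.If_cases Int_def)
  finally show "cdf_of M (\<lambda>\<omega>. x (f \<omega>)) a = empirical_cdf n x a"
    by (simp add: empirical_cdf_def)
qed

lemma compact_law_rv_finite_index_comp:
  fixes f :: "'a \<Rightarrow> nat"
  assumes "\<forall>\<omega>\<in>space M. f \<omega> < n" and "\<forall>i<n. {\<omega>\<in>space M. f \<omega> = i} \<in> sets M"
  shows "compact_law_rv M (\<lambda>\<omega>. x (f \<omega>))"
proof -
  have "f -` {i} \<inter> space M = (if i < n then {\<omega>\<in>space M. f \<omega> = i} else {})" for i
    using assms(1) by auto
  then have "f -` {i} \<inter> space M \<in> sets M" for i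
    using assms(2) by simp
  then have "f \<in> measurable M (count_space UNIV)"
    unfolding measurable_count_space_eq2_countable by blast
  then have "(\<lambda>\<omega>. x (f \<omega>)) \<in> borel_measurable M"
    by (rule measurable_compose) simp
  moreover have "AE \<omega> in M. x (f \<omega>) \<in> x ` {..<n}"
    using assms(1) by (intro AE_I2) auto
  ultimately show ?thesis
    unfolding compact_law_rv_def by (blast intro: finite_imp_compact)
qed

lemma compact_law_rv_add_const:
  assumes "compact_law_rv M X"
  shows "compact_law_rv M (\<lambda>\<omega>. X \<omega> + c)"
proof -
  obtain K where "compact K" "AE \<omega> in M. X \<omega> \<in> K"
    using assms by (auto simp: compact_law_rv_def)
  then have "compact ((\<lambda>x. x + c) ` K)" "AE \<omega> in M. X \<omega> + c \<in> (\<lambda>x. x + c) ` K"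
    by (auto intro!: compact_continuous_image continuous_intros elim!: eventually_mono)
  then show ?thesis
    using assms by (auto simp: compact_law_rv_def)
qed

lemma law_invariant_exposure_dist_le:
  assumes "law_invariant_exposure M rho" "compact_law_rv M X" "compact_law_rv M Y"
    and "AE \<omega> in M. \<bar>X \<omega> - Y \<omega>\<bar> \<le> d"
  shows "\<bar>rho (cdf_of M X) - rho (cdf_of M Y)\<bar> \<le> d"
proof -
  have le_shift: "rho (cdf_of M X1) \<le> rho (cdf_of M X2) + d"
    if "compact_law_rv M X1" "compact_law_rv M X2" "AE \<omega> in M. X1 \<omega> \<le> X2 \<omega> + d" for X1 X2
  proof -
    have "rho (cdf_of M X1) \<le> rho (cdf_of M (\<lambda>\<omega>. X2 \<omega> + d))"
      using assms(1) that(1,3) compact_law_rv_add_const[OF that(2)]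
      unfolding law_invariant_exposure_def by blast
    also have "\<dots> = rho (cdf_of M X2) + d"
      using assms(1) that(2) by (auto simp: law_invariant_exposure_def)
    finally show ?thesis .
  qed
  have "rho (cdf_of M X) \<le> rho (cdf_of M Y) + d" "rho (cdf_of M Y) \<le> rho (cdf_of M X) + d"
    using assms(4) by (auto intro!: le_shift assms(2,3) elim!: eventually_mono)
  then show ?thesis
    by linarith
qed

lemma empirical_law_invariant_exposure_dist_le:
  assumes "prob_space M" "atomless M" "1 \<le> n" "law_invariant_exposure M rho"
    and "\<forall>i<n. \<bar>x i - y i\<bar> \<le> d"
  shows "\<bar>rho (empirical_cdf n x) - rho (empirical_cdf n y)\<bar> \<le> d"
proof -
  interpret prob_space M by (rule assms(1))
  have "measure M (space M) = real n * (1 / real n)"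
    using assms(3) by (simp add: prob_space)
  then obtain f :: "'a \<Rightarrow> nat" where f: "\<forall>\<omega>\<in>space M. f \<omega> < n"
    "\<forall>i<n. {\<omega>\<in>space M. f \<omega> = i} \<in> sets M \<and> measure M {\<omega>\<in>space M. f \<omega> = i} = 1 / real n"
    using atomless_equipartition[OF assms(2) sets.top assms(3)] by blast
  have "\<bar>rho (cdf_of M (\<lambda>\<omega>. x (f \<omega>))) - rho (cdf_of M (\<lambda>\<omega>. y (f \<omega>)))\<bar> \<le> d"
    using f assms(5)
    by (intro law_invariant_exposure_dist_le assms(4) compact_law_rv_finite_index_comp AE_I2) auto
  then show ?thesis
    by (simp add: cdf_of_uniform_index_comp[OF f])
qed

theorem proposition1p1:
  fixes M :: "'a measure" and Z :: "'a \<Rightarrow> 'b::euclidean_space"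
    and V U :: "'b \<Rightarrow> real" and z :: "nat \<Rightarrow> 'b" and n :: nat
    and rho :: "(real \<Rightarrow> real) \<Rightarrow> real"
  assumes "prob_space M" and "atomless M"
    and "Z \<in> borel_measurable M"
    and "compact (supp_law M Z)"
    and "(\<lambda>\<omega>. max (V (Z \<omega>)) 0) \<in> borel_measurable M"
    and "\<exists>C. AE \<omega> in M. \<bar>max (V (Z \<omega>)) 0\<bar> \<le> C"
    and "n \<ge> 1"
    and "\<forall>i<n. z i \<in> supp_law M Z"
    and "law_invariant_exposure M rho"
  shows "ereal \<bar>rho (cdf_of M (\<lambda>\<omega>. max (V (Z \<omega>)) 0))
                  - rho (empirical_cdf n (\<lambda>i. max (U (z i)) 0))\<bar>
         \<le> ereal \<bar>rho (cdf_of M (\<lambda>\<omega>. max (V (Z \<omega>)) 0))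
                  - rho (empirical_cdf n (\<lambda>i. max (V (z i)) 0))\<bar>
           + (SUP s \<in> supp_law M Z. ereal \<bar>V s - U s\<bar>)"
proof -
  define S where "S = (SUP s \<in> supp_law M Z. ereal \<bar>V s - U s\<bar>)"
  have S_upper: "ereal \<bar>V s - U s\<bar> \<le> S" if "s \<in> supp_law M Z" for s
    unfolding S_def using that by (rule SUP_upper)
  show ?thesis
  proof (cases S)
    case (real d)
    have "\<forall>i<n. \<bar>max (V (z i)) 0 - max (U (z i)) 0\<bar> \<le> d"
    proof (intro allI impI)
      fix i
      assume "i < n"
      then have "\<bar>V (z i) - U (z i)\<bar> \<le> d"
        using S_upper[of "z i"] assms(8) real by simp
      then show "\<bar>max (V (z i)) 0 - max (U (z i)) 0\<bar> \<le> d"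
        by linarith
    qed
    then have "\<bar>rho (empirical_cdf n (\<lambda>i. max (V (z i)) 0))
                - rho (empirical_cdf n (\<lambda>i. max (U (z i)) 0))\<bar> \<le> d"
      by (rule empirical_law_invariant_exposure_dist_le[OF assms(1,2,7,9)])
    then show ?thesis
      unfolding S_def[symmetric] real by simp
  next
    case PInf
    then show ?thesis
      unfolding S_def[symmetric] by simp
  next
    case MInf
    then show ?thesis
      using S_upper[of "z 0"] assms(7,8) by simp
  qed
qed

end
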